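(* For each integer $r\ge 1$, let $G_r=(r+1)K_2 \nabla (r+1)K_2$, of order $4r+4$. Then $LE(G_r)=LE(K_{4r+4})=8r+6$ (so $G_r$ is $L$-borderenergetic), and $G_r$ and $K_{4r+4}$ have different Laplacian spectra.
   Context: All graphs are finite, simple and undirected. The Laplacian matrix of $G$ is $L(G)=D-A$ ($D$ degree matrix, $A$ adjacency matrix). For a graph $G$ on $n$ vertices with Laplacian eigenvalues $\mu_1,\dots,\mu_n$ and average degree $\overline d = 2|E(G)|/n$, the Laplacian energy is $LE(G)=\sum_{i=1}^n|\mu_i-\overline d|$. One has $LE(K_n)=2n-2$. A graph $G$ on $n$ vertices is $L$-borderenergetic if $LE(G)=LE(K_n)$. $K_m$ is the complete graph on $m$ vertices, $mG$ is the disjoint union of $m$ copies of $G$, and the join $G_1\nabla G_2$ is obtained from the disjoint union of $G_1$ and $G_2$ by adding all edges between a vertex of $G_1$ and a vertex of $G_2$. *)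

theory Defs
  imports "Jordan_Normal_Form.Char_Poly" "HOL-Computational_Algebra.Polynomial"
begin

text \<open>A finite simple graph on the vertex set {0..<n} is represented as a pair (n, E),
  where E is an adjacency relation; only vertices below n matter.  Simplicity
  (symmetry and irreflexivity) is ensured by all the constructions below.\<close>

type_synonym graph = "nat \<times> (nat \<Rightarrow> nat \<Rightarrow> bool)"

definition order :: "graph \<Rightarrow> nat" where "order G = fst G"
definition adj :: "graph \<Rightarrow> nat \<Rightarrow> nat \<Rightarrow> bool" where "adj G = snd G"

definition complete_graph :: "nat \<Rightarrow> graph" ("K") where
  "K m = (m, \<lambda>i j. i < m \<and> j < m \<and> i \<noteq> j)"

definition disj_union :: "graph \<Rightarrow> graph \<Rightarrow> graph" where
  "disj_union G1 G2 = (order G1 + order G2, \<lambda>i j.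
      (i < order G1 \<and> j < order G1 \<and> adj G1 i j) \<or>
      (order G1 \<le> i \<and> order G1 \<le> j \<and> i < order G1 + order G2 \<and> j < order G1 + order G2
        \<and> adj G2 (i - order G1) (j - order G1)))"

definition join :: "graph \<Rightarrow> graph \<Rightarrow> graph" where
  "join G1 G2 = (order G1 + order G2, \<lambda>i j.
      adj (disj_union G1 G2) i j \<or>
      (i < order G1 \<and> order G1 \<le> j \<and> j < order G1 + order G2) \<or>
      (j < order G1 \<and> order G1 \<le> i \<and> i < order G1 + order G2))"

fun copies :: "nat \<Rightarrow> graph \<Rightarrow> graph" where
  "copies 0 G = (0, \<lambda>i j. False)"
| "copies (Suc m) G = disj_union (copies m G) G"

definition degree :: "graph \<Rightarrow> nat \<Rightarrow> nat" where
  "degree G i = card {j. j < order G \<and> adj G i j}"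

definition num_edges :: "graph \<Rightarrow> nat" where
  "num_edges G = card {(i, j). i < j \<and> j < order G \<and> adj G i j}"

definition avg_degree :: "graph \<Rightarrow> real" where
  "avg_degree G = 2 * real (num_edges G) / real (order G)"

definition laplacian :: "graph \<Rightarrow> real mat" where
  "laplacian G = mat (order G) (order G) (\<lambda>(i, j).
      (if i = j then real (degree G i) else 0) - (if adj G i j then 1 else 0))"

definition laplacian_spectrum :: "graph \<Rightarrow> complex multiset" where
  "laplacian_spectrum G = proots (char_poly (map_mat complex_of_real (laplacian G)))"

definition laplacian_energy :: "graph \<Rightarrow> real" ("LE") where
  "LE G = (\<Sum>\<^sub># (image_mset (\<lambda>\<mu>. cmod (\<mu> - complex_of_real (avg_degree G))) (laplacian_spectrum G)))"

definition L_borderenergetic :: "graph \<Rightarrow> bool" where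
  "L_borderenergetic G \<longleftrightarrow> LE G = LE (K (order G))"

end

theory Submission
  imports Defs
begin

text \<open>
  Both graphs are regular and come with explicit orthogonal Laplacian eigenbases, so their
  spectra are read off from similarity to a diagonal matrix.  For K_n one takes the constant
  vector (eigenvalue 0) and the Helmert contrasts (eigenvalue n).  For G = (pK_2) \<nabla> (pK_2),
  which is (2p+1)-regular, one takes the constant vector (0), the vector that is +1 on one
  side of the join and -1 on the other (4p), the differences across the 2p matching edges
  (2p+2), and, inside each side, the Helmert contrasts of the matching edges (2p).  With
  average degree 2p+1 the energy is (2p+1) + (2p-1) + 2p + 2(p-1) = 8p-2 = LE(K_4p), whereas
  the eigenvalue 2p+2 does not occur in the spectrum {0, 4p} of K_4p once p \<ge> 2.
\<close>

lemma char_poly_eq_prod_if_orthogonal_eigenvectors: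
  fixes A :: "'a::field mat" and v :: "nat \<Rightarrow> nat \<Rightarrow> 'a"
  assumes A: "A \<in> carrier_mat n n"
    and eig: "\<And>j i. j < n \<Longrightarrow> i < n \<Longrightarrow> (\<Sum>k<n. A $$ (i, k) * v j k) = lam j * v j i"
    and orth: "\<And>j l. j < n \<Longrightarrow> l < n \<Longrightarrow> j \<noteq> l \<Longrightarrow> (\<Sum>i<n. v j i * v l i) = 0"
    and nonzero: "\<And>j. j < n \<Longrightarrow> (\<Sum>i<n. v j i * v j i) \<noteq> 0"
  shows "char_poly A = (\<Prod>j<n. [:- lam j, 1:])"
proof -
  define P where "P = mat n n (\<lambda>(i, j). v j i)"
  define Q where "Q = mat n n (\<lambda>(j, i). v j i / (\<Sum>k<n. v j k * v j k))"
  define D where "D = mat n n (\<lambda>(i, j). if i = j then lam i else 0)"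
  have carrier: "P \<in> carrier_mat n n" "Q \<in> carrier_mat n n" "D \<in> carrier_mat n n"
    by (auto simp: P_def Q_def D_def)
  have QP: "Q * P = 1\<^sub>m n"
  proof (rule eq_matI)
    fix j l assume "j < dim_row (1\<^sub>m n :: 'a mat)" "l < dim_col (1\<^sub>m n :: 'a mat)"
    then have jl: "j < n" "l < n" by auto
    have "(Q * P) $$ (j, l) = (\<Sum>i<n. v j i * v l i) / (\<Sum>k<n. v j k * v j k)"
      using jl by (simp add: P_def Q_def scalar_prod_def lessThan_atLeast0 sum_divide_distrib)
    also have "\<dots> = 1\<^sub>m n $$ (j, l)"
      using jl orth[of j l] nonzero[of j] by (cases "j = l") auto
    finally show "(Q * P) $$ (j, l) = 1\<^sub>m n $$ (j, l)" .
  qed (use carrier in auto)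
  have PQ: "P * Q = 1\<^sub>m n"
    using mat_mult_left_right_inverse[OF carrier(2,1) QP] .
  have AP: "A * P = P * D"
  proof (rule eq_matI)
    fix i j assume "i < dim_row (P * D)" "j < dim_col (P * D)"
    then have ij: "i < n" "j < n" using carrier by auto
    have "(A * P) $$ (i, j) = lam j * v j i"
      using ij A eig[OF ij(2,1)] by (simp add: P_def scalar_prod_def lessThan_atLeast0)
    also have "\<dots> = (P * D) $$ (i, j)"
      using ij by (simp add: P_def D_def scalar_prod_def lessThan_atLeast0 if_distrib
          mult.commute cong: if_cong)
    finally show "(A * P) $$ (i, j) = (P * D) $$ (i, j)" .
  qed (use A carrier in auto)
  have "A = P * D * Q"
    using A carrier by (metis AP PQ assoc_mult_mat right_mult_one_mat)
  then have "similar_mat A D"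
    using A carrier PQ QP by (intro similar_matI[of A D P Q n]) auto
  then have "char_poly A = char_poly D"
    by (rule char_poly_similar)
  also have "\<dots> = (\<Prod>j\<leftarrow>[0..<n]. [:- lam j, 1:])"
    by (subst char_poly_upper_triangular[OF carrier(3)])
      (auto simp: upper_triangular_def D_def diag_mat_def intro!: arg_cong[where f = prod_list])
  also have "\<dots> = (\<Prod>j<n. [:- lam j, 1:])"
    by (simp add: prod.distinct_set_conv_list[symmetric] lessThan_atLeast0)
  finally show ?thesis .
qed

lemma orthogonal_if_symmetric_eigenvectors:
  fixes A :: "'a::field mat"
  assumes sym: "\<And>i k. i < n \<Longrightarrow> k < n \<Longrightarrow> A $$ (i, k) = A $$ (k, i)"
    and u: "\<And>i. i < n \<Longrightarrow> (\<Sum>k<n. A $$ (i, k) * u k) = \<alpha> * u i"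
    and w: "\<And>i. i < n \<Longrightarrow> (\<Sum>k<n. A $$ (i, k) * w k) = \<beta> * w i"
    and "\<alpha> \<noteq> \<beta>"
  shows "(\<Sum>i<n. u i * w i) = 0"
proof -
  have "\<alpha> * (\<Sum>i<n. u i * w i) = (\<Sum>i<n. (\<Sum>k<n. A $$ (i, k) * u k) * w i)"
    using u by (simp add: sum_distrib_left mult.assoc)
  also have "\<dots> = (\<Sum>k<n. u k * (\<Sum>i<n. A $$ (k, i) * w i))"
    unfolding sum_distrib_left sum_distrib_right
    by (subst sum.swap) (auto intro!: sum.cong simp: sym mult_ac)
  also have "\<dots> = \<beta> * (\<Sum>k<n. u k * w k)"
    using w by (simp add: sum_distrib_left mult_ac)
  finally show ?thesis
    using \<open>\<alpha> \<noteq> \<beta>\<close> by (metis mult_cancel_right)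
qed

definition neighbours :: "graph \<Rightarrow> nat \<Rightarrow> nat set" where
  "neighbours G i = {j. j < order G \<and> adj G i j}"

definition simple_graph :: "graph \<Rightarrow> bool" where
  "simple_graph G \<longleftrightarrow> (\<forall>i j. adj G i j \<longleftrightarrow> adj G j i) \<and> (\<forall>i. \<not> adj G i i)"

lemma degree_eq_card_neighbours: "degree G i = card (neighbours G i)"
  by (simp add: degree_def neighbours_def)

lemma laplacian_row_sum:
  assumes "i < order G"
  shows "(\<Sum>k<order G. laplacian G $$ (i, k) * x k)
    = real (degree G i) * x i - (\<Sum>j\<in>neighbours G i. x j)"
proof -
  have "neighbours G i = {j \<in> {..<order G}. adj G i j}"
    by (auto simp: neighbours_def)
  then have "(\<Sum>j\<in>neighbours G i. x j) = (\<Sum>k<order G. if adj G i k then x k else 0)"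
    by (simp only: sum.inter_filter[OF finite_lessThan])
  moreover have "(\<Sum>k<order G. laplacian G $$ (i, k) * x k)
      = (\<Sum>k<order G. (if k = i then real (degree G i) * x k else 0) - (if adj G i k then x k else 0))"
    using assms by (intro sum.cong) (auto simp: laplacian_def left_diff_distrib)
  ultimately show ?thesis
    using assms by (simp add: sum_subtractf)
qed

lemma laplacian_symmetric:
  assumes "simple_graph G" "i < order G" "k < order G"
  shows "laplacian G $$ (i, k) = laplacian G $$ (k, i)"
  using assms by (auto simp: laplacian_def simple_graph_def)

lemma sum_degree_eq_twice_num_edges:
  assumes "simple_graph G"
  shows "(\<Sum>i<order G. degree G i) = 2 * num_edges G"
proof -
  define E where "E = {(i, j). i < j \<and> j < order G \<and> adj G i j}"
  have "finite E"
    by (rule finite_subset[of _ "{..<order G} \<times> {..<order G}"]) (auto simp: E_def)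
  have "(\<Sum>i<order G. degree G i) = card (SIGMA i:{..<order G}. neighbours G i)"
    by (simp add: degree_eq_card_neighbours neighbours_def)
  also have "(SIGMA i:{..<order G}. neighbours G i) = E \<union> prod.swap ` E"
    using assms by (auto simp: E_def neighbours_def simple_graph_def image_iff) (metis linorder_neqE_nat)
  also have "card (E \<union> prod.swap ` E) = card E + card E"
    using \<open>finite E\<close> by (subst card_Un_disjoint) (auto simp: card_image E_def)
  finally show ?thesis
    by (simp add: num_edges_def E_def)
qed

lemma avg_degree_regular:
  assumes "simple_graph G" "0 < order G" "\<And>i. i < order G \<Longrightarrow> degree G i = d"
  shows "avg_degree G = real d"
proof -
  have "2 * num_edges G = order G * d"
    using sum_degree_eq_twice_num_edges[OF assms(1)] assms(3) by simp
  then have "2 * real (num_edges G) = real (order G) * real d"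
    by (metis of_nat_mult of_nat_numeral)
  then show ?thesis
    using assms(2) by (simp add: avg_degree_def)
qed

lemma sum_singletons_eq_image_mset: "(\<Sum>s\<in>S. {#f s#}) = image_mset f (mset_set S)"
  by (induction S rule: infinite_finite_induct) auto

lemma laplacian_spectrum_eq_eigenvalues:
  fixes v :: "'b \<Rightarrow> nat \<Rightarrow> real" and lam :: "'b \<Rightarrow> real"
  assumes G: "simple_graph G" and S: "finite S" "card S = order G"
    and eig: "\<And>s i. s \<in> S \<Longrightarrow> i < order G \<Longrightarrow>
      real (degree G i) * v s i - (\<Sum>j\<in>neighbours G i. v s j) = lam s * v s i"
    and orth: "\<And>s t. s \<in> S \<Longrightarrow> t \<in> S \<Longrightarrow> s \<noteq> t \<Longrightarrow> lam s = lam t \<Longrightarrow>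
      (\<Sum>i<order G. v s i * v t i) = 0"
    and nonzero: "\<And>s. s \<in> S \<Longrightarrow> \<exists>i<order G. v s i \<noteq> 0"
  shows "laplacian_spectrum G = image_mset (\<lambda>s. complex_of_real (lam s)) (mset_set S)"
proof -
  let ?n = "order G"
  obtain f where f: "bij_betw f {..<?n} S"
    using ex_bij_betw_nat_finite[OF S(1)] S(2) by (metis lessThan_atLeast0)
  have fS: "f j \<in> S" if "j < ?n" for j
    using f that by (auto dest: bij_betwE)
  have eig': "(\<Sum>k<?n. laplacian G $$ (i, k) * v s k) = lam s * v s i" if "s \<in> S" "i < ?n" for s i
    using laplacian_row_sum[OF that(2)] eig[OF that] by simp
  have orth': "(\<Sum>i<?n. v s i * v t i) = 0" if "s \<in> S" "t \<in> S" "s \<noteq> t" for s t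
  proof (cases "lam s = lam t")
    case False
    then show ?thesis
      using laplacian_symmetric[OF G] eig'[OF that(1)] eig'[OF that(2)]
      by (intro orthogonal_if_symmetric_eigenvectors[of ?n "laplacian G"]) auto
  qed (use orth that in auto)
  have norm_pos: "0 < (\<Sum>i<?n. v s i * v s i)" if s: "s \<in> S" for s
  proof -
    obtain i where "i < ?n" "v s i \<noteq> 0"
      using nonzero[OF s] by blast
    then show ?thesis
      by (intro sum_pos2[of "{..<?n}" i]) (auto simp: zero_less_mult_iff linorder_neq_iff)
  qed
  have "char_poly (map_mat complex_of_real (laplacian G)) = (\<Prod>j<?n. [:- complex_of_real (lam (f j)), 1:])"
  proof (rule char_poly_eq_prod_if_orthogonal_eigenvectors[where v = "\<lambda>j i. complex_of_real (v (f j) i)"])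
    fix j i assume ji: "j < ?n" "i < ?n"
    have "(\<Sum>k<?n. map_mat complex_of_real (laplacian G) $$ (i, k) * complex_of_real (v (f j) k))
        = complex_of_real (\<Sum>k<?n. laplacian G $$ (i, k) * v (f j) k)"
      using ji by (auto simp: laplacian_def intro!: sum.cong)
    then show "(\<Sum>k<?n. map_mat complex_of_real (laplacian G) $$ (i, k) * complex_of_real (v (f j) k))
        = complex_of_real (lam (f j)) * complex_of_real (v (f j) i)"
      using eig'[OF fS ji(2)] ji(1) by simp
  next
    fix j l assume jl: "j < ?n" "l < ?n" "j \<noteq> l"
    then have "f j \<noteq> f l"
      using f by (auto simp: bij_betw_def inj_on_def)
    then show "(\<Sum>i<?n. complex_of_real (v (f j) i) * complex_of_real (v (f l) i)) = 0"
      using orth'[OF fS[OF jl(1)] fS[OF jl(2)]] by (simp flip: of_real_mult of_real_sum)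
  next
    fix j assume "j < ?n"
    then have "(\<Sum>i<?n. v (f j) i * v (f j) i) \<noteq> 0"
      using norm_pos[OF fS] by (metis less_irrefl)
    then show "(\<Sum>i<?n. complex_of_real (v (f j) i) * complex_of_real (v (f j) i)) \<noteq> 0"
      by (simp flip: of_real_mult of_real_sum)
  qed (simp add: laplacian_def)
  then have "laplacian_spectrum G = (\<Sum>j<?n. {#complex_of_real (lam (f j))#})"
    by (simp add: laplacian_spectrum_def proots_prod)
  also have "\<dots> = (\<Sum>s\<in>S. {#complex_of_real (lam s)#})"
    using sum.reindex_bij_betw[OF f] by simp
  finally show ?thesis
    by (simp add: sum_singletons_eq_image_mset)
qed

lemma laplacian_energy_eq_sum_eigenvalues:
  assumes "laplacian_spectrum G = image_mset (\<lambda>s. complex_of_real (lam s)) (mset_set S)"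
  shows "LE G = (\<Sum>s\<in>S. \<bar>lam s - avg_degree G\<bar>)"
  by (simp add: laplacian_energy_def assms sum_unfold_sum_mset image_mset.compositionality comp_def
      flip: of_real_diff)

definition helmert :: "nat \<Rightarrow> nat \<Rightarrow> nat \<Rightarrow> nat \<Rightarrow> real" where
  "helmert w a k i = of_bool (a \<le> i \<and> i < a + w * k) - real k * of_bool (a + w * k \<le> i \<and> i < a + w * k + w)"

lemma helmert_eq_0: "\<not> (a \<le> i \<and> i < a + w * k + w) \<Longrightarrow> helmert w a k i = 0"
  by (auto simp: helmert_def)

lemma helmert_start: "0 < w \<Longrightarrow> 0 < k \<Longrightarrow> helmert w a k a = 1"
  by (simp add: helmert_def)

lemma sum_helmert:
  assumes "c \<le> a" "a + w * k + w \<le> d"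
  shows "(\<Sum>i\<in>{c..<d}. helmert w a k i) = 0"
proof -
  have "{c..<d} \<inter> {i. a \<le> i \<and> i < a + w * k} = {a..<a + w * k}"
    "{c..<d} \<inter> {i. a + w * k \<le> i \<and> i < a + w * k + w} = {a + w * k..<a + w * k + w}"
    using assms by auto
  then show ?thesis
    by (simp add: helmert_def sum_subtractf flip: sum_distrib_left)
qed

lemma sum_helmert_disjoint:
  assumes "d \<le> a \<or> a + w * k + w \<le> c"
  shows "(\<Sum>i\<in>{c..<d}. helmert w a k i) = 0"
  using assms by (intro sum.neutral) (auto intro: helmert_eq_0)

lemma helmert_mult_helmert:
  assumes "k < l"
  shows "helmert w a k i * helmert w a l i = helmert w a k i"
proof (cases "a \<le> i \<and> i < a + w * k + w")
  case True
  moreover have "w * k + w \<le> w * l"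
    using assms by (metis Suc_leI mult_Suc_right add.commute mult_le_mono2)
  ultimately have "helmert w a l i = 1"
    by (simp add: helmert_def)
  then show ?thesis
    by simp
qed (simp add: helmert_eq_0)

lemma helmert_orthogonal:
  assumes "k \<noteq> l" "a + w * max k l + w \<le> n"
  shows "(\<Sum>i<n. helmert w a k i * helmert w a l i) = 0"
proof -
  have "(\<Sum>i<n. helmert w a k i * helmert w a l i) = 0" if "k < l" "a + w * l + w \<le> n" for k l
  proof -
    have "a + w * k + w \<le> n"
      using that by (meson add_le_mono1 le_trans less_imp_le_nat mult_le_mono2 nat_add_left_cancel_le)
    then show ?thesis
      using sum_helmert[of 0 a w k n] by (simp add: helmert_mult_helmert[OF \<open>k < l\<close>] lessThan_atLeast0)
  qed
  from this[of k l] this[of l k] show ?thesis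
    using assms by (cases "k < l") (auto simp: max_def mult.commute)
qed

lemma order_complete_graph: "order (K n) = n"
  by (simp add: order_def complete_graph_def)

lemma adj_complete_graph: "adj (K n) i j \<longleftrightarrow> i < n \<and> j < n \<and> i \<noteq> j"
  by (simp add: adj_def complete_graph_def)

lemma simple_graph_complete_graph: "simple_graph (K n)"
  by (auto simp: simple_graph_def adj_complete_graph)

lemma neighbours_complete_graph: "i < n \<Longrightarrow> neighbours (K n) i = {..<n} - {i}"
  by (auto simp: neighbours_def order_complete_graph adj_complete_graph)

lemma degree_complete_graph: "i < n \<Longrightarrow> degree (K n) i = n - 1"
  by (simp add: degree_eq_card_neighbours neighbours_complete_graph)

lemma laplacian_spectrum_complete_graph:
  "laplacian_spectrum (K n) = image_mset (\<lambda>k. complex_of_real (if k = 0 then 0 else real n)) (mset_set {..<n})"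
proof (rule laplacian_spectrum_eq_eigenvalues[where v = "\<lambda>k. if k = 0 then (\<lambda>_. 1) else helmert 1 0 k"])
  fix k i assume "k \<in> {..<n}" "i < order (K n)"
  then have ki: "k < n" "i < n"
    by (simp_all add: order_complete_graph)
  have "real (degree (K n) i) * x i - (\<Sum>j\<in>neighbours (K n) i. x j) = real n * x i - (\<Sum>j<n. x j)" for x
    using ki by (simp add: degree_complete_graph neighbours_complete_graph sum_diff1 algebra_simps)
  moreover have "(\<Sum>j<n. helmert 1 0 k j) = 0"
    using ki sum_helmert[of 0 0 1 k n] by (simp add: lessThan_atLeast0)
  ultimately show "real (degree (K n) i) * (if k = 0 then \<lambda>_. 1 else helmert 1 0 k) i
      - (\<Sum>j\<in>neighbours (K n) i. (if k = 0 then \<lambda>_. 1 else helmert 1 0 k) j)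
    = (if k = 0 then 0 else real n) * (if k = 0 then \<lambda>_. 1 else helmert 1 0 k) i"
    by simp
next
  fix k l assume "k \<in> {..<n}" "l \<in> {..<n}" "k \<noteq> l"
    and "(if k = 0 then 0 else real n) = (if l = 0 then 0 else real n)"
  then show "(\<Sum>i<order (K n). (if k = 0 then \<lambda>_. 1 else helmert 1 0 k) i * (if l = 0 then \<lambda>_. 1 else helmert 1 0 l) i) = 0"
    by (auto simp: order_complete_graph max_def intro: helmert_orthogonal split: if_splits)
next
  fix k assume "k \<in> {..<n}"
  then show "\<exists>i<order (K n). (if k = 0 then \<lambda>_. 1 else helmert 1 0 k) i \<noteq> 0"
    by (intro exI[of _ 0]) (simp add: order_complete_graph helmert_start)
qed (simp_all add: simple_graph_complete_graph order_complete_graph)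

lemma laplacian_energy_complete_graph:
  assumes "0 < n"
  shows "LE (K n) = 2 * real n - 2"
proof -
  obtain m where n: "n = Suc m"
    using assms not0_implies_Suc by blast
  have "avg_degree (K (Suc m)) = real m"
    using avg_degree_regular[OF simple_graph_complete_graph]
    by (simp add: order_complete_graph degree_complete_graph)
  then have "LE (K (Suc m)) = (\<Sum>k<Suc m. \<bar>(if k = 0 then 0 else real (Suc m)) - real m\<bar>)"
    using laplacian_energy_eq_sum_eigenvalues[OF laplacian_spectrum_complete_graph] by simp
  also have "\<dots> = 2 * real (Suc m) - 2"
    unfolding sum.lessThan_Suc_shift by simp
  finally show ?thesis
    using n by simp
qed

lemma less_double_iff_div2: "i < 2 * c \<longleftrightarrow> i div 2 < c" for i c :: nat
  by linarith

lemma div2_diff_double: "(i - 2 * c) div 2 = i div 2 - c" for i c :: nat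
  by linarith

lemma order_copies_K2: "order (copies p (K 2)) = 2 * p"
  by (induction p) (auto simp: disj_union_def order_def complete_graph_def)

lemma adj_copies_K2:
  "adj (copies p (K 2)) i j \<longleftrightarrow> i < 2 * p \<and> j < 2 * p \<and> i div 2 = j div 2 \<and> i \<noteq> j"
proof (induction p arbitrary: i j)
  case 0
  then show ?case
    by (simp add: adj_def)
next
  case (Suc p)
  have "adj (copies (Suc p) (K 2)) i j \<longleftrightarrow>
      (i < 2 * p \<and> j < 2 * p \<and> i div 2 = j div 2 \<and> i \<noteq> j) \<or>
      (2 * p \<le> i \<and> 2 * p \<le> j \<and> i < 2 * p + 2 \<and> j < 2 * p + 2 \<and> i \<noteq> j)"
    by (auto simp: disj_union_def adj_def[of "(_, _)"] order_def[of "(_, _)"] order_copies_K2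
        Suc.IH adj_complete_graph order_complete_graph)
  also have "\<dots> \<longleftrightarrow> i < 2 * Suc p \<and> j < 2 * Suc p \<and> i div 2 = j div 2 \<and> i \<noteq> j"
    unfolding not_less[symmetric] less_double_iff_div2 add_2_eq_Suc' mult_Suc_right[symmetric]
    by auto
  finally show ?case .
qed

definition matching_join :: "nat \<Rightarrow> graph" where
  "matching_join p = join (copies p (K 2)) (copies p (K 2))"

definition partner :: "nat \<Rightarrow> nat" where
  "partner i = (if even i then i + 1 else i - 1)"

lemma same_pair_iff_partner: "i div 2 = j div 2 \<and> i \<noteq> j \<longleftrightarrow> j = partner i"
  unfolding partner_def by (cases "even i") (auto, presburger+)

lemma partner_in_even_interval:
  "even a \<Longrightarrow> even b \<Longrightarrow> a \<le> partner i \<and> partner i < b \<longleftrightarrow> a \<le> i \<and> i < b"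
  unfolding partner_def by (cases "even i") (auto, presburger+)

lemma order_matching_join: "order (matching_join p) = 4 * p"
  by (simp add: matching_join_def join_def order_def[of "(_, _)"] order_copies_K2)

lemma adj_matching_join:
  "adj (matching_join p) i j \<longleftrightarrow>
    i < 4 * p \<and> j < 4 * p \<and> ((i < 2 * p) \<noteq> (j < 2 * p) \<or> j = partner i)"
proof -
  have "adj (matching_join p) i j \<longleftrightarrow> i < 4 * p \<and> j < 4 * p \<and>
      ((i < 2 * p) \<noteq> (j < 2 * p) \<or> i div 2 = j div 2 \<and> i \<noteq> j)"
    unfolding matching_join_def join_def disj_union_def adj_def[of "(_, _)"] order_def[of "(_, _)"]
    by (auto simp: order_copies_K2 adj_copies_K2 div2_diff_double)
  then show ?thesis
    by (simp add: same_pair_iff_partner)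
qed

lemma partner_ne: "partner i \<noteq> i"
  by (auto simp: partner_def elim: oddE)

lemma partner_partner: "partner (partner i) = i"
  by (auto simp: partner_def)

lemma simple_graph_matching_join: "simple_graph (matching_join p)"
  unfolding simple_graph_def adj_matching_join by (metis partner_ne partner_partner)

definition opposite_half :: "nat \<Rightarrow> nat \<Rightarrow> nat set" where
  "opposite_half p i = (if i < 2 * p then {2 * p..<4 * p} else {0..<2 * p})"

lemma neighbours_matching_join:
  assumes "i < 4 * p"
  shows "neighbours (matching_join p) i = insert (partner i) (opposite_half p i)"
    and "partner i \<notin> opposite_half p i"
  using assms partner_in_even_interval[of 0 "2 * p" i] partner_in_even_interval[of 0 "4 * p" i]
  by (auto simp: neighbours_def order_matching_join adj_matching_join opposite_half_def)

lemma finite_opposite_half: "finite (opposite_half p i)"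
  by (simp add: opposite_half_def)

lemma card_opposite_half: "card (opposite_half p i) = 2 * p"
  by (simp add: opposite_half_def)

lemma degree_matching_join: "i < 4 * p \<Longrightarrow> degree (matching_join p) i = 2 * p + 1"
  by (simp add: degree_eq_card_neighbours neighbours_matching_join finite_opposite_half
      card_opposite_half)

lemma laplacian_action_matching_join:
  assumes "i < 4 * p"
  shows "real (degree (matching_join p) i) * x i - (\<Sum>j\<in>neighbours (matching_join p) i. x j)
    = real (2 * p + 1) * x i - x (partner i) - (\<Sum>j\<in>opposite_half p i. x j)"
  using assms by (simp add: degree_matching_join neighbours_matching_join finite_opposite_half)

datatype mj_label = Ones | Halves | Edge nat | Block nat nat

fun mj_vector :: "nat \<Rightarrow> mj_label \<Rightarrow> nat \<Rightarrow> real" where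
  "mj_vector p Ones i = 1"
| "mj_vector p Halves i = (if i < 2 * p then 1 else -1)"
| "mj_vector p (Edge q) i = of_bool (i = 2 * q) - of_bool (i = 2 * q + 1)"
| "mj_vector p (Block b k) i = helmert 2 (2 * p * b) k i"

fun mj_eigenvalue :: "nat \<Rightarrow> mj_label \<Rightarrow> real" where
  "mj_eigenvalue p Ones = 0"
| "mj_eigenvalue p Halves = 4 * real p"
| "mj_eigenvalue p (Edge q) = 2 * real p + 2"
| "mj_eigenvalue p (Block b k) = 2 * real p"

definition mj_labels :: "nat \<Rightarrow> mj_label set" where
  "mj_labels p = {Ones, Halves} \<union> Edge ` {..<2 * p} \<union> (\<lambda>(b, k). Block b k) ` ({..<2} \<times> {1..<p})"

lemma mj_labels_cases:
  assumes "s \<in> mj_labels p"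
  obtains "s = Ones" | "s = Halves" | q where "s = Edge q" "q < 2 * p"
    | b k where "s = Block b k" "b < 2" "1 \<le> k" "k < p"
  using assms unfolding mj_labels_def by auto

lemma helmert_partner: "even a \<Longrightarrow> helmert 2 a k (partner i) = helmert 2 a k i"
  by (simp add: helmert_def partner_in_even_interval)

lemma sum_block_opposite_half:
  assumes "b < 2" "k < p"
  shows "(\<Sum>j\<in>opposite_half p i. helmert 2 (2 * p * b) k j) = 0"
proof -
  have "2 * p * b + 2 * k + 2 \<le> 2 * p * b + 2 * p"
    using assms by simp
  then show ?thesis
    using assms sum_helmert[of _ "2 * p * b" 2 k] sum_helmert_disjoint[of _ "2 * p * b" 2 k]
    by (auto simp: opposite_half_def less_2_cases_iff)
qed

text \<open>Ones, Halves and Block vectors are constant on every matching edge, Edge vectors change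
  sign across it; Edge and Block vectors sum to zero over each side of the join.\<close>

lemma mj_vector_eigen:
  assumes s: "s \<in> mj_labels p" and i: "i < 4 * p"
  shows "real (2 * p + 1) * mj_vector p s i - mj_vector p s (partner i)
      - (\<Sum>j\<in>opposite_half p i. mj_vector p s j) = mj_eigenvalue p s * mj_vector p s i"
  using s
proof (cases rule: mj_labels_cases)
  case 1
  then show ?thesis
    by (simp add: opposite_half_def)
next
  case 2
  then show ?thesis
    using partner_in_even_interval[of 0 "2 * p" i] by (auto simp: opposite_half_def)
next
  case (3 q)
  have "partner i = 2 * q \<longleftrightarrow> i = 2 * q + 1" "partner i = 2 * q + 1 \<longleftrightarrow> i = 2 * q"
    by (auto simp: partner_def; presburger)+
  moreover have "2 * q \<in> opposite_half p i \<longleftrightarrow> 2 * q + 1 \<in> opposite_half p i"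
    by (auto simp: opposite_half_def; presburger)
  then have "(\<Sum>j\<in>opposite_half p i. mj_vector p (Edge q) j) = 0"
    by (simp add: sum_subtractf of_bool_def finite_opposite_half)
  ultimately show ?thesis
    using 3 by (auto simp: algebra_simps)
next
  case (4 b k)
  then show ?thesis
    using sum_block_opposite_half[of b k p i] by (simp add: helmert_partner algebra_simps)
qed

text \<open>For p = 1 the eigenvalues of Halves and Edge vectors coincide, hence 2 \<le> p.\<close>

lemma mj_vector_orthogonal:
  assumes "2 \<le> p" and s: "s \<in> mj_labels p" and t: "t \<in> mj_labels p"
    and "s \<noteq> t" and same: "mj_eigenvalue p s = mj_eigenvalue p t"
  shows "(\<Sum>i<4 * p. mj_vector p s i * mj_vector p t i) = 0"
  using s
proof (cases rule: mj_labels_cases)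
  case (3 q)
  from t obtain q' where "t = Edge q'" "q \<noteq> q'"
    using 3 same \<open>2 \<le> p\<close> \<open>s \<noteq> t\<close> by (cases rule: mj_labels_cases) auto
  then show ?thesis
    using 3 by (intro sum.neutral) auto
next
  case (4 b k)
  from t obtain b' k' where t': "t = Block b' k'" "b' < 2" "k' < p" "(b, k) \<noteq> (b', k')"
    using 4 same \<open>2 \<le> p\<close> \<open>s \<noteq> t\<close> by (cases rule: mj_labels_cases) auto
  show ?thesis
  proof (cases "b = b'")
    case True
    have "2 * p * b + 2 * max k k' + 2 \<le> 4 * p"
      using 4 t' by (auto simp: max_def less_2_cases_iff)
    then show ?thesis
      using 4 t' True by (simp add: helmert_orthogonal)
  next
    case False
    then have "helmert 2 (2 * p * b) k i = 0 \<or> helmert 2 (2 * p * b') k' i = 0" for i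
      using 4 t' by (auto intro!: helmert_eq_0 simp: less_2_cases_iff)
    then show ?thesis
      using 4 t' by (intro sum.neutral) auto
  qed
qed (use t same \<open>2 \<le> p\<close> \<open>s \<noteq> t\<close> in \<open>auto elim: mj_labels_cases\<close>)

lemma mj_vector_nonzero:
  assumes "1 \<le> p" "s \<in> mj_labels p"
  shows "\<exists>i<4 * p. mj_vector p s i \<noteq> 0"
  using assms(2)
proof (cases rule: mj_labels_cases)
  case (3 q)
  then show ?thesis
    by (intro exI[of _ "2 * q"]) simp
next
  case (4 b k)
  then show ?thesis
    by (intro exI[of _ "2 * p * b"]) (auto simp: helmert_start less_2_cases_iff)
qed (use assms in \<open>auto intro!: exI[of _ 0]\<close>)

lemma sum_mj_labels:
  "(\<Sum>s\<in>mj_labels p. f s) = f Ones + f Halves + (\<Sum>q<2 * p. f (Edge q))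
    + (\<Sum>b<2. \<Sum>k\<in>{1..<p}. f (Block b k))"
proof -
  let ?E = "Edge ` {..<2 * p}" and ?B = "(\<lambda>(b, k). Block b k) ` ({..<2} \<times> {1..<p})"
  have "mj_labels p = insert Ones (insert Halves (?E \<union> ?B))"
    "Ones \<notin> insert Halves (?E \<union> ?B)" "Halves \<notin> ?E \<union> ?B"
    by (auto simp: mj_labels_def)
  then have "(\<Sum>s\<in>mj_labels p. f s) = f Ones + f Halves + (\<Sum>s\<in>?E \<union> ?B. f s)"
    by (simp add: add.assoc)
  also have "\<dots> = f Ones + f Halves + (\<Sum>s\<in>?E. f s)
      + (\<Sum>s\<in>?B. f s)"
    by (subst sum.union_disjoint) (auto simp: add.assoc)
  also have "\<dots> = f Ones + f Halves + (\<Sum>q<2 * p. f (Edge q))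
      + (\<Sum>b<2. \<Sum>k\<in>{1..<p}. f (Block b k))"
    by (simp add: sum.reindex inj_on_def sum.cartesian_product case_prod_beta)
  finally show ?thesis .
qed

lemma finite_mj_labels: "finite (mj_labels p)"
  by (simp add: mj_labels_def)

lemma card_mj_labels:
  assumes "1 \<le> p"
  shows "card (mj_labels p) = 4 * p"
proof -
  have "card (mj_labels p) = (\<Sum>s\<in>mj_labels p. 1)"
    by simp
  also have "\<dots> = 2 + 2 * p + 2 * (p - 1)"
    unfolding sum_mj_labels by simp
  also have "\<dots> = 4 * p"
    using assms by simp
  finally show ?thesis .
qed

lemma laplacian_spectrum_matching_join:
  assumes "2 \<le> p"
  shows "laplacian_spectrum (matching_join p)
    = image_mset (\<lambda>s. complex_of_real (mj_eigenvalue p s)) (mset_set (mj_labels p))"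
proof (rule laplacian_spectrum_eq_eigenvalues[where v = "mj_vector p"])
  fix s i assume "s \<in> mj_labels p" "i < order (matching_join p)"
  then show "real (degree (matching_join p) i) * mj_vector p s i
      - (\<Sum>j\<in>neighbours (matching_join p) i. mj_vector p s j) = mj_eigenvalue p s * mj_vector p s i"
    using mj_vector_eigen[of s p i] by (simp add: order_matching_join laplacian_action_matching_join)
qed (use assms in \<open>simp_all add: simple_graph_matching_join finite_mj_labels card_mj_labels
    order_matching_join mj_vector_orthogonal mj_vector_nonzero\<close>)

lemma laplacian_energy_matching_join:
  assumes "2 \<le> p"
  shows "LE (matching_join p) = 8 * real p - 2"
proof -
  have "avg_degree (matching_join p) = 2 * real p + 1"
    using avg_degree_regular[OF simple_graph_matching_join] assms
    by (simp add: order_matching_join degree_matching_join)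
  then have "LE (matching_join p) = (\<Sum>s\<in>mj_labels p. \<bar>mj_eigenvalue p s - (2 * real p + 1)\<bar>)"
    using laplacian_energy_eq_sum_eigenvalues[OF laplacian_spectrum_matching_join[OF assms]] by simp
  also have "\<dots> = (2 * real p + 1) + (2 * real p - 1) + 2 * real p + 2 * real (p - 1)"
    using assms by (simp add: sum_mj_labels)
  also have "\<dots> = 8 * real p - 2"
    using assms by simp
  finally show ?thesis .
qed

theorem theorem3:
  fixes r :: nat
  assumes "r \<ge> 1"
  defines "G \<equiv> join (copies (r + 1) (K 2)) (copies (r + 1) (K 2))"
  shows "order G = 4 * r + 4
    \<and> LE G = LE (K (4 * r + 4)) \<and> LE (K (4 * r + 4)) = 8 * real r + 6
    \<and> L_borderenergetic G
    \<and> laplacian_spectrum G \<noteq> laplacian_spectrum (K (4 * r + 4))"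
proof -
  have p: "2 \<le> r + 1"
    using assms by simp
  have G: "G = matching_join (r + 1)"
    unfolding G_def matching_join_def ..
  have order: "order G = 4 * r + 4"
    by (simp add: G order_matching_join)
  have LE_G: "LE G = 8 * real r + 6"
    using laplacian_energy_matching_join[OF p] by (simp add: G)
  have LE_K: "LE (K (4 * r + 4)) = 8 * real r + 6"
    using laplacian_energy_complete_graph[of "4 * r + 4"] by simp
  have "Edge 0 \<in># mset_set (mj_labels (r + 1))"
    by (simp add: finite_mj_labels mj_labels_def)
  then have "complex_of_real (mj_eigenvalue (r + 1) (Edge 0)) \<in># laplacian_spectrum G"
    unfolding G laplacian_spectrum_matching_join[OF p] in_image_mset by (rule imageI)
  moreover have "mj_eigenvalue (r + 1) (Edge 0) \<notin> {0, real (4 * r + 4)}"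
    using assms by simp
  then have "complex_of_real (mj_eigenvalue (r + 1) (Edge 0)) \<notin># laplacian_spectrum (K (4 * r + 4))"
    by (auto simp: laplacian_spectrum_complete_graph simp del: mj_eigenvalue.simps split: if_splits)
  ultimately show ?thesis
    using order LE_G LE_K by (auto simp: L_borderenergetic_def)
qed

end
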